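(* For all positive integers $n$, \[ g(n)\le f_3(2n,4,3)\le 2\lceil\log n\rceil^2 g(n). \]
   Context: Logarithms are base 2. The grid graph $\Gamma_{n,n}$ has vertex set $[n]\times[n]$, distinct vertices $(i,j),(i',j')$ adjacent iff $i=i'$ or $j=j'$. A rectangle is the induced subgraph on $\{(i,j),(i',j),(i,j'),(i',j')\}$ with $i<i'$, $j<j'$; in an edge coloring it is alternating if $\{(i,j),(i',j)\}$ and $\{(i,j'),(i',j')\}$ share a color and $\{(i,j),(i,j')\}$ and $\{(i',j),(i',j')\}$ share a color. $g(n)$ is the minimum $r$ for which some edge coloring of $\Gamma_{n,n}$ with $r$ colors has no alternating rectangle. $f_3(N,4,3)$ is the minimum $r$ for which there is a coloring of the triples of an $N$-element set (the edges of $K_N^{(3)}$) with $r$ colors such that every set of $4$ vertices has at least $3$ distinct colors on its $4$ triples. *)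

theory Defs
  imports Complex_Main
begin

definition grid_vertices :: "nat \<Rightarrow> (nat \<times> nat) set" where
  "grid_vertices n = {1..n} \<times> {1..n}"

definition grid_edges :: "nat \<Rightarrow> (nat \<times> nat) set set" where
  "grid_edges n = {{u, v} | u v. u \<in> grid_vertices n \<and> v \<in> grid_vertices n \<and> u \<noteq> v
                     \<and> (fst u = fst v \<or> snd u = snd v)}"

definition has_alt_rect :: "nat \<Rightarrow> ((nat \<times> nat) set \<Rightarrow> nat) \<Rightarrow> bool" where
  "has_alt_rect n c \<longleftrightarrow> (\<exists>i i' j j'. 1 \<le> i \<and> i < i' \<and> i' \<le> n \<and> 1 \<le> j \<and> j < j' \<and> j' \<le> n \<and>
      c {(i,j),(i',j)} = c {(i,j'),(i',j')} \<and> c {(i,j),(i,j')} = c {(i',j),(i',j')})"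

definition g :: "nat \<Rightarrow> nat" where
  "g n = (LEAST r. \<exists>c. (\<forall>e\<in>grid_edges n. c e < r) \<and> \<not> has_alt_rect n c)"

definition f3_43 :: "nat \<Rightarrow> nat" where
  "f3_43 N = (LEAST r. \<exists>c :: nat set \<Rightarrow> nat.
      (\<forall>T. T \<subseteq> {0..<N} \<and> card T = 3 \<longrightarrow> c T < r) \<and>
      (\<forall>S. S \<subseteq> {0..<N} \<and> card S = 4 \<longrightarrow> card (c ` {T. T \<subseteq> S \<and> card T = 3}) \<ge> 3))"

end

theory Submission
  imports Defs
begin

text \<open>
  Lower bound: read the grid vertex \<open>(i, j)\<close> as the pair \<open>{i - 1, n + j - 1}\<close> joining the two
  halves of \<open>{0..<2n}\<close>.  Two vertices in a common row or column share a point, so a grid edge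
  becomes a triple, and the four edges of an alternating rectangle become the four triples of a
  single 4-set, which then carry only two colours.

  Upper bound: place the \<open>2n\<close> points as leaves of a binary tree of height \<open>L + 1\<close>, where
  \<open>n \<le> 2^L\<close>, with the two halves in the two subtrees of the root.  For \<open>p < q < r\<close> the pairs
  \<open>pq\<close> and \<open>qr\<close> split at different levels and \<open>pr\<close> splits at the higher one.  Colour \<open>pqr\<close> by
  the ordered pair of these two levels together with the grid colour of an edge built from the
  residues of \<open>p, q, r\<close> modulo \<open>n\<close>; the closer pair lies in one half, so its residues differ.
  Among the four triples of \<open>w < x < y < z\<close> the level pairs already take three values unless
  \<open>xy\<close> splits highest, and then two coincidences of colours would form an alternating rectangle.
  There are \<open>(L + 1) L \<le> 2 L\<^sup>2\<close> ordered pairs of distinct levels.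
\<close>

lemma card_3_obtain_sorted:
  fixes T :: "'a::linorder set"
  assumes "card T = 3"
  obtains p q r where "p < q" "q < r" "T = {p, q, r}"
proof -
  define xs where "xs = sorted_list_of_set T"
  have "finite T" using assms by (simp add: card_ge_0_finite)
  then have "length xs = 3" "sorted_wrt (<) xs" "set xs = T"
    unfolding xs_def using assms by simp_all
  then show ?thesis using that by (auto simp: numeral_eq_Suc length_Suc_conv)
qed

lemma card_4_obtain_sorted:
  fixes S :: "'a::linorder set"
  assumes "card S = 4"
  obtains w x y z where "w < x" "x < y" "y < z" "S = {w, x, y, z}"
proof -
  define xs where "xs = sorted_list_of_set S"
  have "finite S" using assms by (simp add: card_ge_0_finite)
  then have "length xs = 4" "sorted_wrt (<) xs" "set xs = S"
    unfolding xs_def using assms by simp_all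
  then show ?thesis using that by (auto simp: numeral_eq_Suc length_Suc_conv)
qed

lemma subsets_card_pred_eq:
  assumes "finite S" "S \<noteq> {}"
  shows "{T. T \<subseteq> S \<and> card T = card S - 1} = (\<lambda>x. S - {x}) ` S"
proof (intro equalityI subsetI)
  fix T assume "T \<in> {T. T \<subseteq> S \<and> card T = card S - 1}"
  then have T: "T \<subseteq> S" "card T = card S - 1" by auto
  have "card (S - T) = card S - card T"
    using T assms by (simp add: card_Diff_subset finite_subset)
  also have "\<dots> = Suc 0"
    using T(2) assms by (simp add: Suc_leI card_gt_0_iff)
  finally have "card (S - T) = Suc 0" .
  then obtain x where x: "S - T = {x}" by (auto simp: card_1_singleton_iff)
  then have "T = S - {x}" "x \<in> S" using T(1) by auto
  then show "T \<in> (\<lambda>x. S - {x}) ` S" by blast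
qed (use assms in auto)

lemma subsets_card_3_of_4:
  assumes "distinct [a, b, c, d]"
  shows "{T. T \<subseteq> {a, b, c, d} \<and> card T = 3} = {{b, c, d}, {a, c, d}, {a, b, d}, {a, b, c}}"
proof -
  have "card {a, b, c, d} = 4" using assms by simp
  then have "{T. T \<subseteq> {a, b, c, d} \<and> card T = 3} = (\<lambda>x. {a, b, c, d} - {x}) ` {a, b, c, d}"
    using subsets_card_pred_eq[of "{a, b, c, d}"] by simp
  then show ?thesis using assms by auto
qed

lemma three_le_card:
  assumes "finite X" "{a, b, c} \<subseteq> X" "a \<noteq> b" "a \<noteq> c" "b \<noteq> c"
  shows "3 \<le> card X"
  using card_mono[OF assms(1,2)] assms(3-5) by simp

text \<open>The height of the lowest common ancestor of the leaves \<open>x\<close> and \<open>y\<close> of the infinite binary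
  tree, i.e. the highest bit in which \<open>x\<close> and \<open>y\<close> differ.\<close>

definition split_level :: "nat \<Rightarrow> nat \<Rightarrow> nat" where
  "split_level x y = (LEAST k. x div 2 ^ Suc k = y div 2 ^ Suc k)"

lemma div_power2_eq_mono:
  fixes x y :: nat
  assumes "x div 2 ^ k = y div 2 ^ k" "k \<le> m"
  shows "x div 2 ^ m = y div 2 ^ m"
proof -
  have "(2::nat) ^ m = 2 ^ k * 2 ^ (m - k)" using assms(2) by (simp flip: power_add)
  then show ?thesis using assms(1) by (simp add: div_mult2_eq)
qed

lemma div_power2_eq_iff_split_level:
  assumes "x \<noteq> y"
  shows "x div 2 ^ k = y div 2 ^ k \<longleftrightarrow> split_level x y < k"
proof
  have "x < 2 ^ Suc (x + y)" "y < 2 ^ Suc (x + y)"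
    using less_exp[of "Suc (x + y)"] by linarith+
  then have "x div 2 ^ Suc (Suc (x + y)) = y div 2 ^ Suc (Suc (x + y))"
    by (metis div_less div_power2_eq_mono le_SucI order_refl)
  then have "x div 2 ^ Suc (split_level x y) = y div 2 ^ Suc (split_level x y)"
    unfolding split_level_def by (rule LeastI)
  moreover assume "split_level x y < k"
  ultimately show "x div 2 ^ k = y div 2 ^ k"
    using div_power2_eq_mono Suc_leI by blast
next
  assume eq: "x div 2 ^ k = y div 2 ^ k"
  show "split_level x y < k"
  proof (cases k)
    case 0
    then show ?thesis using eq assms by simp
  next
    case (Suc m)
    have "split_level x y \<le> m"
      unfolding split_level_def by (rule Least_le) (use eq Suc in blast)
    then show ?thesis using Suc by simp
  qed
qed

lemma split_level_le:
  assumes "x < 2 ^ Suc L" "y < 2 ^ Suc L" "x \<noteq> y"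
  shows "split_level x y \<le> L"
  using div_power2_eq_iff_split_level[OF assms(3), of "Suc L"] assms(1,2) by simp

lemma div_eq_between:
  fixes x y z d :: nat
  assumes "x \<le> y" "y \<le> z" "x div d = z div d"
  shows "x div d = y div d" "y div d = z div d"
  using div_le_mono[OF assms(1), of d] div_le_mono[OF assms(2), of d] assms(3) by simp_all

lemma split_level_max:
  assumes "x < y" "y < z"
  shows "split_level x z = max (split_level x y) (split_level y z)"
proof -
  have "split_level x z < k \<longleftrightarrow> split_level x y < k \<and> split_level y z < k" for k
  proof -
    have "x div 2 ^ k = z div 2 ^ k \<longleftrightarrow> x div 2 ^ k = y div 2 ^ k \<and> y div 2 ^ k = z div 2 ^ k"
      using div_eq_between[of x y z "2 ^ k"] assms by (metis less_imp_le)
    then show ?thesis using assms by (simp add: div_power2_eq_iff_split_level)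
  qed
  from this[of "Suc (split_level x z)"] this[of "Suc (max (split_level x y) (split_level y z))"]
  show ?thesis by (auto simp: less_Suc_eq_le max_def)
qed

lemma split_level_neq:
  assumes "x < y" "y < z"
  shows "split_level x y \<noteq> split_level y z"
proof
  assume eq: "split_level x y = split_level y z"
  define k where "k = split_level x y"
  define X Y Z where "X = x div 2 ^ k" and "Y = y div 2 ^ k" and "Z = z div 2 ^ k"
  have "X \<le> Y" "Y \<le> Z" unfolding X_def Y_def Z_def using assms by (simp_all add: div_le_mono)
  moreover have "X \<noteq> Y" "Y \<noteq> Z"
    unfolding X_def Y_def Z_def k_def using eq assms
    by (simp_all add: div_power2_eq_iff_split_level)
  moreover have "X div 2 = Y div 2" "Y div 2 = Z div 2"
  proof -
    have halve: "w div 2 ^ k div 2 = w div 2 ^ Suc k" for w :: nat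
      by (simp only: power_Suc2 div_mult2_eq)
    have "x div 2 ^ Suc k = y div 2 ^ Suc k" "y div 2 ^ Suc k = z div 2 ^ Suc k"
      using div_power2_eq_iff_split_level[of x y "Suc k"] div_power2_eq_iff_split_level[of y z "Suc k"]
        eq assms k_def by simp_all
    then show "X div 2 = Y div 2" "Y div 2 = Z div 2"
      by (simp_all only: X_def Y_def Z_def halve)
  qed
  ultimately show False by linarith
qed

definition alt_free_colouring :: "nat \<Rightarrow> nat \<Rightarrow> ((nat \<times> nat) set \<Rightarrow> nat) \<Rightarrow> bool" where
  "alt_free_colouring n r \<chi> \<longleftrightarrow> (\<forall>e\<in>grid_edges n. \<chi> e < r) \<and> \<not> has_alt_rect n \<chi>"

definition three_colours_on_4_sets :: "nat \<Rightarrow> (nat set \<Rightarrow> 'a) \<Rightarrow> bool" where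
  "three_colours_on_4_sets N c \<longleftrightarrow>
     (\<forall>S. S \<subseteq> {0..<N} \<and> card S = 4 \<longrightarrow> 3 \<le> card (c ` {T. T \<subseteq> S \<and> card T = 3}))"

lemma g_eq_Least: "g n = (LEAST r. \<exists>\<chi>. alt_free_colouring n r \<chi>)"
  by (simp add: g_def alt_free_colouring_def)

lemma f3_43_eq_Least:
  "f3_43 N = (LEAST r. \<exists>c. (\<forall>T. T \<subseteq> {0..<N} \<and> card T = 3 \<longrightarrow> c T < r) \<and>
                           three_colours_on_4_sets N c)"
  by (simp add: f3_43_def three_colours_on_4_sets_def)

lemma g_le: "alt_free_colouring n r \<chi> \<Longrightarrow> g n \<le> r"
  unfolding g_eq_Least by (rule Least_le) blast

lemma alt_free_colouring_by_column: "alt_free_colouring n (Suc n) (\<lambda>e. Max (snd ` e))"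
  unfolding alt_free_colouring_def
proof
  show "\<forall>e\<in>grid_edges n. Max (snd ` e) < Suc n"
    by (auto simp: grid_edges_def grid_vertices_def)
  show "\<not> has_alt_rect n (\<lambda>e. Max (snd ` e))"
    by (auto simp: has_alt_rect_def)
qed

lemma g_attained: obtains \<chi> where "alt_free_colouring n (g n) \<chi>"
proof -
  have "\<exists>\<chi>. alt_free_colouring n (g n) \<chi>"
    unfolding g_eq_Least by (rule LeastI) (rule exI, rule alt_free_colouring_by_column)
  then show ?thesis using that by blast
qed

lemma f3_43_le:
  fixes c :: "nat set \<Rightarrow> nat"
  assumes "\<forall>T. T \<subseteq> {0..<N} \<and> card T = 3 \<longrightarrow> c T < r" "three_colours_on_4_sets N c"
  shows "f3_43 N \<le> r"
  unfolding f3_43_eq_Least by (rule Least_le) (use assms in blast)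

lemma f3_43_attained:
  fixes c :: "nat set \<Rightarrow> nat"
  assumes "\<forall>T. T \<subseteq> {0..<N} \<and> card T = 3 \<longrightarrow> c T < r" "three_colours_on_4_sets N c"
  obtains c' :: "nat set \<Rightarrow> nat" where "\<forall>T. T \<subseteq> {0..<N} \<and> card T = 3 \<longrightarrow> c' T < f3_43 N"
    "three_colours_on_4_sets N c'"
proof -
  have "\<exists>c'. (\<forall>T. T \<subseteq> {0..<N} \<and> card T = 3 \<longrightarrow> c' T < f3_43 N) \<and> three_colours_on_4_sets N c'"
    unfolding f3_43_eq_Least by (rule LeastI_ex) (use assms in blast)
  then show ?thesis using that by blast
qed

lemma three_colours_on_4_sets_palette:
  fixes c :: "nat set \<Rightarrow> 'a"
  assumes palette: "\<And>T. T \<subseteq> {0..<N} \<Longrightarrow> card T = 3 \<Longrightarrow> c T \<in> C" and "finite C"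
    and colours: "three_colours_on_4_sets N c"
  obtains c' :: "nat set \<Rightarrow> nat"
  where "\<forall>T. T \<subseteq> {0..<N} \<and> card T = 3 \<longrightarrow> c' T < card C" "three_colours_on_4_sets N c'"
proof -
  obtain h where h: "bij_betw h C {0..<card C}"
    using ex_bij_betw_finite_nat[OF \<open>finite C\<close>] by blast
  have "\<forall>T. T \<subseteq> {0..<N} \<and> card T = 3 \<longrightarrow> (h \<circ> c) T < card C"
    using palette bij_betwE[OF h] by fastforce
  moreover have "card ((h \<circ> c) ` {T. T \<subseteq> S \<and> card T = 3}) = card (c ` {T. T \<subseteq> S \<and> card T = 3})"
    if "S \<subseteq> {0..<N}" for S
  proof -
    have "c ` {T. T \<subseteq> S \<and> card T = 3} \<subseteq> C" using palette that by blast
    then have "inj_on h (c ` {T. T \<subseteq> S \<and> card T = 3})"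
      using bij_betw_imp_inj_on[OF h] inj_on_subset by blast
    then show ?thesis unfolding image_comp [symmetric] by (rule card_image)
  qed
  then have "three_colours_on_4_sets N (h \<circ> c)"
    using colours unfolding three_colours_on_4_sets_def by simp
  ultimately show ?thesis by (rule that)
qed

lemma grid_edge_column:
  "i \<in> {1..n} \<Longrightarrow> i' \<in> {1..n} \<Longrightarrow> j \<in> {1..n} \<Longrightarrow> i \<noteq> i' \<Longrightarrow> {(i, j), (i', j)} \<in> grid_edges n"
  unfolding grid_edges_def grid_vertices_def by fastforce

lemma grid_edge_row:
  "i \<in> {1..n} \<Longrightarrow> j \<in> {1..n} \<Longrightarrow> j' \<in> {1..n} \<Longrightarrow> j \<noteq> j' \<Longrightarrow> {(i, j), (i, j')} \<in> grid_edges n"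
  unfolding grid_edges_def grid_vertices_def by fastforce

lemma has_alt_rectI:
  assumes "i \<in> {1..n}" "i' \<in> {1..n}" "j \<in> {1..n}" "j' \<in> {1..n}" "i \<noteq> i'" "j \<noteq> j'"
    and "\<chi> {(i, j), (i', j)} = \<chi> {(i, j'), (i', j')}"
    and "\<chi> {(i, j), (i, j')} = \<chi> {(i', j), (i', j')}"
  shows "has_alt_rect n \<chi>"
proof -
  have flips:
    "\<chi> {(i', j), (i, j)} = \<chi> {(i', j'), (i, j')}" "\<chi> {(i', j), (i', j')} = \<chi> {(i, j), (i, j')}"
    "\<chi> {(i, j'), (i', j')} = \<chi> {(i, j), (i', j)}" "\<chi> {(i, j'), (i, j)} = \<chi> {(i', j'), (i', j)}"
    "\<chi> {(i', j'), (i, j')} = \<chi> {(i', j), (i, j)}" "\<chi> {(i', j'), (i', j)} = \<chi> {(i, j'), (i, j)}"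
    using assms(7,8) by (simp_all add: insert_commute)
  have range: "1 \<le> i" "i \<le> n" "1 \<le> i'" "i' \<le> n" "1 \<le> j" "j \<le> n" "1 \<le> j'" "j' \<le> n"
    using assms(1-4) by auto
  consider "i < i'" "j < j'" | "i < i'" "j' < j" | "i' < i" "j < j'" | "i' < i" "j' < j"
    using assms(5,6) by linarith
  then show ?thesis
    unfolding has_alt_rect_def using range assms(7,8) flips
    by cases blast+
qed

definition edge_triple :: "nat \<Rightarrow> (nat \<times> nat) set \<Rightarrow> nat set" where
  "edge_triple n e = (\<Union>v\<in>e. {fst v - 1, n + snd v - 1})"

lemma edge_triple_column: "edge_triple n {(i, j), (i', j)} = {i - 1, i' - 1, n + j - 1}"
  by (auto simp: edge_triple_def)

lemma edge_triple_row: "edge_triple n {(i, j), (i, j')} = {i - 1, n + j - 1, n + j' - 1}"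
  by (auto simp: edge_triple_def)

lemma edge_triple_of_grid_edge:
  assumes "e \<in> grid_edges n"
  shows "edge_triple n e \<subseteq> {0..<2 * n}" "card (edge_triple n e) = 3"
proof -
  obtain i j i' j' where e: "e = {(i, j), (i', j')}" "(i, j) \<noteq> (i', j')" "i = i' \<or> j = j'"
    and range: "i \<in> {1..n}" "j \<in> {1..n}" "i' \<in> {1..n}" "j' \<in> {1..n}"
    using assms unfolding grid_edges_def grid_vertices_def by auto
  then show "edge_triple n e \<subseteq> {0..<2 * n}" by (auto simp: edge_triple_def)
  from e(3) show "card (edge_triple n e) = 3"
  proof
    assume "i = i'"
    then have "distinct [i - 1, n + j - 1, n + j' - 1]" using e range by auto
    then show ?thesis using \<open>i = i'\<close> e(1) by (simp add: edge_triple_row)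
  next
    assume "j = j'"
    then have "distinct [i - 1, i' - 1, n + j - 1]" using e range by auto
    then show ?thesis using \<open>j = j'\<close> e(1) by (simp add: edge_triple_column)
  qed
qed

lemma alt_free_colouring_of_triple_colouring:
  assumes bound: "\<forall>T. T \<subseteq> {0..<2 * n} \<and> card T = 3 \<longrightarrow> c T < r"
    and colours: "three_colours_on_4_sets (2 * n) c"
  shows "alt_free_colouring n r (c \<circ> edge_triple n)"
  unfolding alt_free_colouring_def
proof
  show "\<forall>e\<in>grid_edges n. (c \<circ> edge_triple n) e < r"
    using bound edge_triple_of_grid_edge by simp
  show "\<not> has_alt_rect n (c \<circ> edge_triple n)"
  proof
    assume "has_alt_rect n (c \<circ> edge_triple n)"
    then obtain i i' j j' where ij: "1 \<le> i" "i < i'" "i' \<le> n" "1 \<le> j" "j < j'" "j' \<le> n"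
      and col: "c {i - 1, i' - 1, n + j - 1} = c {i - 1, i' - 1, n + j' - 1}"
      and row: "c {i - 1, n + j - 1, n + j' - 1} = c {i' - 1, n + j - 1, n + j' - 1}"
      unfolding has_alt_rect_def by (auto simp: edge_triple_column edge_triple_row)
    define a a' b b' where "a = i - 1" and "a' = i' - 1" and "b = n + j - 1" and "b' = n + j' - 1"
    have order: "a < a'" "a' < b" "b < b'" "b' < 2 * n"
      unfolding a_def a'_def b_def b'_def using ij by linarith+
    then have distinct: "distinct [a, a', b, b']" by auto
    define S where "S = {a, a', b, b'}"
    have S: "S \<subseteq> {0..<2 * n}" "card S = 4" unfolding S_def using order distinct by auto
    have "c {a, a', b} = c {a, a', b'}" "c {a, b, b'} = c {a', b, b'}"
      using col row by (simp_all add: a_def a'_def b_def b'_def)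
    then have "c ` {T. T \<subseteq> S \<and> card T = 3} = {c {a, a', b}, c {a, b, b'}}"
      unfolding S_def subsets_card_3_of_4[OF distinct] by auto
    then have "card (c ` {T. T \<subseteq> S \<and> card T = 3}) \<le> 2"
      by (simp add: card_insert_le_m1)
    moreover have "3 \<le> card (c ` {T. T \<subseteq> S \<and> card T = 3})"
      using colours S unfolding three_colours_on_4_sets_def by blast
    ultimately show False by simp
  qed
qed

locale binary_halves =
  fixes n L :: nat
  assumes n_le: "n \<le> 2 ^ L"
begin

definition embed :: "nat \<Rightarrow> nat" where
  "embed p = (if p < n then p else p - n + 2 ^ L)"

definition level :: "nat \<Rightarrow> nat \<Rightarrow> nat" where
  "level p q = split_level (embed p) (embed q)"

lemma embed_less: "p < q \<Longrightarrow> q < 2 * n \<Longrightarrow> embed p < embed q"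
  using n_le unfolding embed_def by auto

lemma embed_bound: "p < 2 * n \<Longrightarrow> embed p < 2 ^ Suc L"
  using n_le unfolding embed_def by auto

lemma level_le:
  assumes "p < q" "q < 2 * n"
  shows "level p q \<le> L"
proof -
  have "embed p < embed q" "embed q < 2 ^ Suc L" using assms embed_less embed_bound by auto
  then show ?thesis unfolding level_def by (simp add: split_level_le)
qed

lemma level_max: "p < q \<Longrightarrow> q < r \<Longrightarrow> r < 2 * n \<Longrightarrow> level p r = max (level p q) (level q r)"
  unfolding level_def using embed_less by (simp add: split_level_max)

lemma level_neq: "p < q \<Longrightarrow> q < r \<Longrightarrow> r < 2 * n \<Longrightarrow> level p q \<noteq> level q r"
  unfolding level_def using embed_less by (simp add: split_level_neq)

lemma mod_neq_if_level_less:
  assumes "p < q" "q < 2 * n" "level p q < L"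
  shows "p mod n \<noteq> q mod n"
proof -
  have half: "embed x div 2 ^ L = (if x < n then 0 else 1)" if "x < 2 * n" for x
  proof (cases "x < n")
    case False
    define t where "t = x - n"
    have "embed x = 2 ^ L + t" "t < 2 ^ L" using False that n_le by (auto simp: embed_def t_def)
    then show ?thesis using False by (simp add: div_add_self1)
  qed (use n_le in \<open>simp add: embed_def\<close>)
  have "embed p \<noteq> embed q" using assms embed_less less_imp_neq by blast
  then have "embed p div 2 ^ L = embed q div 2 ^ L"
    using assms(3) unfolding level_def by (simp add: div_power2_eq_iff_split_level)
  then have "p < n \<longleftrightarrow> q < n" using half assms by (auto split: if_splits)
  then show ?thesis using assms by (auto simp: mod_if)
qed

end

locale triple_colouring_from_grid = binary_halves +
  fixes R :: nat and \<chi> :: "(nat \<times> nat) set \<Rightarrow> nat"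
  assumes n_pos: "0 < n" and alt_free: "alt_free_colouring n R \<chi>"
begin

definition grid_index :: "nat \<Rightarrow> nat" where
  "grid_index p = p mod n + 1"

definition triple_colour :: "nat \<Rightarrow> nat \<Rightarrow> nat \<Rightarrow> (nat \<times> nat) \<times> nat" where
  "triple_colour p q r = ((level p q, level q r),
     if level p q < level q r
     then \<chi> {(grid_index p, grid_index r), (grid_index q, grid_index r)}
     else \<chi> {(grid_index p, grid_index q), (grid_index p, grid_index r)})"

definition colour :: "nat set \<Rightarrow> (nat \<times> nat) \<times> nat" where
  "colour T = triple_colour (Min T) (Min (T - {Min T})) (Max T)"

definition palette :: "((nat \<times> nat) \<times> nat) set" where
  "palette = (SIGMA a:{..L}. {..L} - {a}) \<times> {..<R}"

lemma card_palette: "card palette = (L + 1) * L * R"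
proof -
  have "card (SIGMA a:{..L}. {..L} - {a}) = (L + 1) * L"
    by (simp add: card_Diff_subset)
  then show ?thesis by (simp add: palette_def card_cartesian_product)
qed

lemma grid_index_range: "grid_index p \<in> {1..n}"
  using n_pos by (simp add: grid_index_def Suc_leI)

lemma grid_index_neq: "p < q \<Longrightarrow> q < 2 * n \<Longrightarrow> level p q < L \<Longrightarrow> grid_index p \<noteq> grid_index q"
  using mod_neq_if_level_less by (simp add: grid_index_def)

lemma triple_colour_in_palette:
  assumes "p < q" "q < r" "r < 2 * n"
  shows "triple_colour p q r \<in> palette"
proof -
  have levels: "level p q \<le> L" "level q r \<le> L" "level p q \<noteq> level q r"
    using assms level_le level_neq by simp_all
  have "\<chi> e < R" if "e \<in> grid_edges n" for e
    using alt_free that by (simp add: alt_free_colouring_def)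
  moreover have "{(grid_index p, grid_index r), (grid_index q, grid_index r)} \<in> grid_edges n"
    if "level p q < level q r"
    using that levels assms grid_index_neq[of p q] grid_index_range by (simp add: grid_edge_column)
  moreover have "{(grid_index p, grid_index q), (grid_index p, grid_index r)} \<in> grid_edges n"
    if "\<not> level p q < level q r"
    using that levels assms grid_index_neq[of q r] grid_index_range by (simp add: grid_edge_row)
  ultimately show ?thesis using levels by (simp add: triple_colour_def palette_def)
qed

lemma colour_eq_triple_colour: "p < q \<Longrightarrow> q < r \<Longrightarrow> colour {p, q, r} = triple_colour p q r"
  by (simp add: colour_def insert_Diff_if min_def max_def)

lemma three_le_card_triple_colours:
  assumes "w < x" "x < y" "y < z" "z < 2 * n"
  shows "3 \<le> card {triple_colour x y z, triple_colour w y z, triple_colour w x z, triple_colour w x y}"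
    (is "3 \<le> card {?xyz, ?wyz, ?wxz, ?wxy}")
proof -
  define d1 d2 d3 where "d1 = level w x" and "d2 = level x y" and "d3 = level y z"
  have "d1 \<noteq> d2" "d2 \<noteq> d3" unfolding d1_def d2_def d3_def using assms level_neq by auto
  have "level w y = max d1 d2" "level x z = max d2 d3"
    unfolding d1_def d2_def d3_def using assms level_max by auto
  then have fsts: "fst ?xyz = (d2, d3)" "fst ?wyz = (max d1 d2, d3)"
    "fst ?wxz = (d1, max d2 d3)" "fst ?wxy = (d1, d2)"
    by (simp_all add: triple_colour_def d1_def d2_def d3_def)
  consider "d2 < d1" "d2 < d3" | "d1 < d2" "d2 < d3" | "d3 < d2" "d2 < d1" | "d1 < d2" "d3 < d2"
    using \<open>d1 \<noteq> d2\<close> \<open>d2 \<noteq> d3\<close> by linarith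
  then show ?thesis
  proof cases
    case 1
    then show ?thesis using fsts by (intro three_le_card[of _ ?wxy ?wxz ?xyz]) auto
  next
    case 2
    then show ?thesis using fsts by (intro three_le_card[of _ ?wxy ?wxz ?wyz]) auto
  next
    case 3
    then show ?thesis using fsts by (intro three_le_card[of _ ?wxy ?wyz ?xyz]) auto
  next
    case 4
    \<comment> \<open>\<open>xy\<close> splits highest: the level pairs only separate \<open>{wxy, wxz}\<close> from \<open>{wyz, xyz}\<close>.\<close>
    have "?wxy \<noteq> ?wxz \<or> ?wyz \<noteq> ?xyz"
    proof (rule ccontr)
      assume "\<not> (?wxy \<noteq> ?wxz \<or> ?wyz \<noteq> ?xyz)"
      then have "\<chi> {(grid_index w, grid_index y), (grid_index x, grid_index y)}
                   = \<chi> {(grid_index w, grid_index z), (grid_index x, grid_index z)}"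
        "\<chi> {(grid_index w, grid_index y), (grid_index w, grid_index z)}
                   = \<chi> {(grid_index x, grid_index y), (grid_index x, grid_index z)}"
        using 4 fsts by (simp_all add: triple_colour_def)
      moreover have "grid_index w \<noteq> grid_index x" "grid_index y \<noteq> grid_index z"
        using 4 assms level_le[of x y] grid_index_neq unfolding d1_def d2_def d3_def by auto
      ultimately have "has_alt_rect n \<chi>" using grid_index_range by (intro has_alt_rectI)
      then show False using alt_free by (simp add: alt_free_colouring_def)
    qed
    then show ?thesis
    proof
      assume "?wxy \<noteq> ?wxz"
      then show ?thesis using 4 fsts by (intro three_le_card[of _ ?wxy ?wxz ?xyz]) auto
    next
      assume "?wyz \<noteq> ?xyz"
      then show ?thesis using 4 fsts by (intro three_le_card[of _ ?wxy ?wyz ?xyz]) auto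
    qed
  qed
qed

lemma three_colours_on_4_sets_colour: "three_colours_on_4_sets (2 * n) colour"
  unfolding three_colours_on_4_sets_def
proof (intro allI impI)
  fix S assume S: "S \<subseteq> {0..<2 * n} \<and> card S = 4"
  then obtain w x y z where wxyz: "w < x" "x < y" "y < z" "S = {w, x, y, z}"
    using card_4_obtain_sorted by blast
  then have "z < 2 * n" using S by auto
  moreover have "distinct [w, x, y, z]" using wxyz by auto
  ultimately show "3 \<le> card (colour ` {T. T \<subseteq> S \<and> card T = 3})"
    using wxyz three_le_card_triple_colours by (simp add: subsets_card_3_of_4 colour_eq_triple_colour)
qed

lemma bounded_triple_colouring:
  obtains c :: "nat set \<Rightarrow> nat"
  where "\<forall>T. T \<subseteq> {0..<2 * n} \<and> card T = 3 \<longrightarrow> c T < (L + 1) * L * R"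
    and "three_colours_on_4_sets (2 * n) c"
proof (rule three_colours_on_4_sets_palette)
  fix T assume "T \<subseteq> {0..<2 * n}" "card T = 3"
  then obtain p q r where "p < q" "q < r" "T = {p, q, r}" "r < 2 * n"
    using card_3_obtain_sorted by (metis atLeastLessThan_iff insert_subset)
  then show "colour T \<in> palette" by (simp add: colour_eq_triple_colour triple_colour_in_palette)
qed (use that card_palette three_colours_on_4_sets_colour in \<open>simp_all add: palette_def\<close>)

end

lemma ceiling_log2_bound:
  assumes "1 \<le> n"
  shows "n \<le> 2 ^ nat \<lceil>log 2 (real n)\<rceil>"
proof -
  define M where "M = nat \<lceil>log 2 (real n)\<rceil>"
  have "log 2 (real n) \<le> real M" unfolding M_def by linarith
  then have "real n \<le> 2 powr real M" using assms log_le_iff[of 2 "real n" "real M"] by simp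
  also have "\<dots> = real (2 ^ M)" by (simp add: powr_realpow)
  finally show ?thesis unfolding M_def of_nat_le_iff .
qed

theorem proposition4p1:
  fixes n :: nat
  assumes "n \<ge> 1"
  shows "g n \<le> f3_43 (2 * n) \<and>
         real (f3_43 (2 * n)) \<le> 2 * (of_int \<lceil>log 2 (real n)\<rceil>)^2 * real (g n)"
proof -
  define L where "L = nat \<lceil>log 2 (real n)\<rceil>"
  have "n \<le> 2 ^ L" unfolding L_def using assms by (rule ceiling_log2_bound)
  obtain \<chi> where \<chi>: "alt_free_colouring n (g n) \<chi>" by (rule g_attained)
  interpret triple_colouring_from_grid n L "g n" \<chi>
    by unfold_locales (use assms \<open>n \<le> 2 ^ L\<close> \<chi> in auto)
  obtain c where c: "\<forall>T. T \<subseteq> {0..<2 * n} \<and> card T = 3 \<longrightarrow> c T < (L + 1) * L * g n"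
    "three_colours_on_4_sets (2 * n) c"
    by (rule bounded_triple_colouring)
  then have upper: "f3_43 (2 * n) \<le> (L + 1) * L * g n" by (rule f3_43_le)
  obtain c' where "\<forall>T. T \<subseteq> {0..<2 * n} \<and> card T = 3 \<longrightarrow> c' T < f3_43 (2 * n)"
    "three_colours_on_4_sets (2 * n) c'"
    using c by (rule f3_43_attained)
  then have lower: "g n \<le> f3_43 (2 * n)"
    by (rule g_le[OF alt_free_colouring_of_triple_colouring])
  have "(L + 1) * L \<le> 2 * L\<^sup>2" by (simp add: power2_eq_square le_square)
  with upper have "f3_43 (2 * n) \<le> 2 * L\<^sup>2 * g n" by (meson le_trans mult_le_mono1)
  then have "real (f3_43 (2 * n)) \<le> real (2 * L\<^sup>2 * g n)" by (simp only: of_nat_le_iff)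
  then have "real (f3_43 (2 * n)) \<le> 2 * (real L)\<^sup>2 * real (g n)" by simp
  moreover have "of_int \<lceil>log 2 (real n)\<rceil> = real L" unfolding L_def using assms by simp
  ultimately show ?thesis using lower by simp
qed

end
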